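(* In the setting of the context, fix a round $t>n$ and suppose the event $\mathcal E'_t=\{\forall M\in\mathcal M:\ |\theta(M)-\widehat\theta_t(M)|\le C_t\|\chi_M\|_{A_{\mathbf x_t}^{-1}}\}$ occurs. If SAQM terminates at round $t$, returning $\widehat M^*=\widehat M^*_t$, then $\theta(M^* )-\theta(\widehat M^* )\le\varepsilon$.
   Context: Setting: $n$ arms with unknown means $\theta\in\mathbb{R}^n$; integer $2\le k\le n$; $\mathcal M=\{M\subseteq[n]:|M|=k\}$; $\theta(S)=\sum_{e\in S}\theta(e)$; $\chi_M$ the indicator vector of $M$; $M^*=\arg\max_{M\in\mathcal M}\theta(M)$. After $t$ pulls $M_1,\dots,M_t$ with full-bandit observations $r_{M_i}$, $A_{\mathbf x_t}=\sum_{i\le t}\chi_{M_i}\chi_{M_i}^\top$ (invertible), $\widehat\theta_t=A_{\mathbf x_t}^{-1}\sum_{i\le t}\chi_{M_i}r_{M_i}$, $\|x\|_B=\sqrt{x^\top Bx}$, $\widehat M^*_t=\arg\max_{M\in\mathcal M}\widehat\theta_t(M)$, and $C_t>0$ is a confidence radius. SAQM computes $M'_t\in\mathcal M$ with $\|\chi_{M'_t}\|_{A_{\mathbf x_t}^{-1}}\ge\alpha_t\max_{M\in\mathcal M}\|\chi_M\|_{A_{\mathbf x_t}^{-1}}$ for some $\alpha_t\in(0,1]$, sets $Z_t=C_t\|\chi_{M'_t}\|_{A_{\mathbf x_t}^{-1}}$, and terminates at round $t$ exactly when $\widehat\theta_t(\widehat M^*_t)-C_t\|\chi_{\widehat M^*_t}\|_{A_{\mathbf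 x_t}^{-1}}\ge\max_{M\in\mathcal M\setminus\{\widehat M^*_t\}}\widehat\theta_t(M)+Z_t/\alpha_t-\varepsilon$, where $\varepsilon>0$ is the accuracy parameter. *)

theory Defs
  imports "HOL-Analysis.Analysis"
begin

text \<open>Arms are the elements of a finite type 'n, so n = CARD('n).\<close>

definition chi :: "'n::finite set \<Rightarrow> real^'n" where
  "chi M = (\<chi> i. if i \<in> M then 1 else 0)"

definition setval :: "real^'n::finite \<Rightarrow> 'n set \<Rightarrow> real" where
  "setval \<theta> S = (\<Sum>e\<in>S. \<theta> $ e)"

definition superarms :: "nat \<Rightarrow> ('n::finite) set set" where
  "superarms k = {M. card M = k}"

definition outer :: "real^'n \<Rightarrow> real^'n \<Rightarrow> real^'n^'n" where
  "outer x y = (\<chi> i j. x $ i * y $ j)"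

definition design :: "(nat \<Rightarrow> 'n::finite set) \<Rightarrow> nat \<Rightarrow> real^'n^'n" where
  "design pulls t = (\<Sum>i\<in>{1..t}. outer (chi (pulls i)) (chi (pulls i)))"

definition theta_hat :: "(nat \<Rightarrow> 'n::finite set) \<Rightarrow> (nat \<Rightarrow> real) \<Rightarrow> nat \<Rightarrow> real^'n" where
  "theta_hat pulls r t = matrix_inv (design pulls t) *v (\<Sum>i\<in>{1..t}. r i *\<^sub>R chi (pulls i))"

definition mnorm :: "real^'n^'n \<Rightarrow> real^'n \<Rightarrow> real" where
  "mnorm B x = sqrt (x \<bullet> (B *v x))"

end

theory Submission
  imports Defs
begin

text \<open>Under the confidence event the true value of any competitor M exceeds the
  estimated one by at most C w(M), and w(M) is at most w(M')/\<alpha> by the approximation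
  guarantee for M'. The stopping rule makes the pessimistic estimate of the returned
  superarm beat the optimistic estimate of every competitor up to \<epsilon>, so no competitor,
  in particular M*, is better by more than \<epsilon>.\<close>

lemma le_div_of_approx_max:
  fixes w :: "'a \<Rightarrow> real"
  assumes "finite S" "x \<in> S" "0 < \<alpha>" "\<alpha> * Max (w ` S) \<le> y"
  shows "w x \<le> y / \<alpha>"
proof -
  have "\<alpha> * w x \<le> \<alpha> * Max (w ` S)"
    using assms by (intro mult_left_mono Max_ge) auto
  also have "\<dots> \<le> y" by (fact assms(4))
  finally show ?thesis
    using assms(3) by (simp add: pos_le_divide_eq mult.commute)
qed

lemma stopping_rule_eps_optimal:
  fixes val est wid :: "'a \<Rightarrow> real"
  assumes "m \<in> S" "m' \<in> S"
    and conf: "\<forall>M\<in>S. \<bar>val M - est M\<bar> \<le> wid M"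
    and wid_bound: "\<forall>M\<in>S. wid M \<le> Z"
    and stop: "\<forall>M\<in>S - {m}. est m - wid m \<ge> est M + Z - \<epsilon>"
    and "0 \<le> \<epsilon>"
  shows "val m' - val m \<le> \<epsilon>"
proof (cases "m' = m")
  case False
  have "val m' \<le> est m' + wid m'" using conf \<open>m' \<in> S\<close> by fastforce
  moreover have "est m - wid m \<le> val m" using conf \<open>m \<in> S\<close> by fastforce
  moreover have "est m - wid m \<ge> est m' + Z - \<epsilon>" using stop \<open>m' \<in> S\<close> False by blast
  ultimately show ?thesis using wid_bound \<open>m' \<in> S\<close> by fastforce
qed (use \<open>0 \<le> \<epsilon>\<close> in simp)

theorem lemma8:
  fixes \<theta> :: "real^'n::finite"
    and k t :: nat
    and pulls :: "nat \<Rightarrow> 'n set"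
    and r :: "nat \<Rightarrow> real"
    and C \<alpha> \<epsilon> :: real
    and Mstar Mhat M' :: "'n set"
  defines "A \<equiv> design pulls t"
    and "th \<equiv> theta_hat pulls r t"
    and "w \<equiv> (\<lambda>M. mnorm (matrix_inv (design pulls t)) (chi M))"
  assumes k: "2 \<le> k" "k \<le> CARD('n)"
    and pulls: "\<forall>i\<in>{1..t}. pulls i \<in> superarms k"
    and t: "t > CARD('n)"
    and inv: "invertible A"
    and C: "C > 0"
    and eps: "\<epsilon> > 0"
    and alpha: "0 < \<alpha>" "\<alpha> \<le> 1"
    and Mstar: "Mstar \<in> superarms k" "\<forall>M\<in>superarms k. setval \<theta> M \<le> setval \<theta> Mstar"
    and Mhat: "Mhat \<in> superarms k" "\<forall>M\<in>superarms k. setval th M \<le> setval th Mhat"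
    and M': "M' \<in> superarms k" "w M' \<ge> \<alpha> * Max (w ` superarms k)"
    and event: "\<forall>M\<in>superarms k. \<bar>setval \<theta> M - setval th M\<bar> \<le> C * w M"
    and stop: "\<forall>M\<in>superarms k - {Mhat}.
                 setval th Mhat - C * w Mhat \<ge> setval th M + (C * w M') / \<alpha> - \<epsilon>"
  shows "setval \<theta> Mstar - setval \<theta> Mhat \<le> \<epsilon>"
proof -
  have "\<forall>M\<in>superarms k. C * w M \<le> C * w M' / \<alpha>"
  proof
    fix M :: "'n set" assume "M \<in> superarms k"
    then have "w M \<le> w M' / \<alpha>"
      using alpha(1) M'(2) by (intro le_div_of_approx_max) auto
    then show "C * w M \<le> C * w M' / \<alpha>"
      using C by (metis less_imp_le mult_left_mono times_divide_eq_right)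
  qed
  then show ?thesis
    using stopping_rule_eps_optimal[OF Mhat(1) Mstar(1) event] stop eps by simp
qed

end
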